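(* Consider an instance with $n$ agents, $m$ divisible items and binary additive valuations (notation as in the context), and let $x$ be a stable fractional allocation with profile $(h_1,\dots,h_n)$. If $d\neq d'$ are two values both attained by coordinates of the profile (i.e. $\mathsf{layer}^*_d$ and $\mathsf{layer}^*_{d'}$ are two different nonempty layers), then $|d-d'|\ge 1/n^2$.
   Context: Agents $[n]$, items $[m]$; each agent $i$ has a set $L_i\subseteq[m]$ of liked items. A fractional allocation is $x=(x_{o,i})$ with $x_{o,i}\ge0$, $\sum_i x_{o,i}\le1$ for each item $o$; clean if $x_{o,i}=0$ for $o\notin L_i$; max-USW if it maximizes $\sum_i\sum_{o\in L_i}x_{o,i}$; allocations are clean and max-USW; profile $h_i=\sum_o x_{o,i}$. A transfer $u\to v$: distinct agents $u=i_1,\dots,i_k=v$ ($k\ge2$), items $o_l$ with $x_{o_l,i_l}>0$, $o_l\in L_{i_{l+1}}$, amount $0<\Delta\le\min_l x_{o_l,i_l}$, moving $\Delta$ of $o_l$ from $i_l$ to $i_{l+1}$; narrowing if $h_u-\Delta\ge h_v+\Delta$; $x$ is stable if it admits no narrowing transfer. For real $d$, $\mathsf{layer}^*_d=\{i:h_i=d\}$. *)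

theory Defs
  imports Complex_Main
begin

text \<open>Agents are 0..<n, items are 0..<m. x t i is the fraction of item t given to agent i.
  L i is the set of items liked by agent i.\<close>

definition frac_alloc :: "nat \<Rightarrow> nat \<Rightarrow> (nat \<Rightarrow> nat \<Rightarrow> real) \<Rightarrow> bool" where
  "frac_alloc n m x \<longleftrightarrow>
     (\<forall>t<m. \<forall>i<n. 0 \<le> x t i) \<and> (\<forall>t<m. (\<Sum>i<n. x t i) \<le> 1)"

definition clean :: "nat \<Rightarrow> nat \<Rightarrow> (nat \<Rightarrow> nat set) \<Rightarrow> (nat \<Rightarrow> nat \<Rightarrow> real) \<Rightarrow> bool" where
  "clean n m L x \<longleftrightarrow> (\<forall>t<m. \<forall>i<n. t \<notin> L i \<longrightarrow> x t i = 0)"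

definition usw :: "nat \<Rightarrow> (nat \<Rightarrow> nat set) \<Rightarrow> (nat \<Rightarrow> nat \<Rightarrow> real) \<Rightarrow> real" where
  "usw n L x = (\<Sum>i<n. \<Sum>t\<in>L i. x t i)"

definition max_usw :: "nat \<Rightarrow> nat \<Rightarrow> (nat \<Rightarrow> nat set) \<Rightarrow> (nat \<Rightarrow> nat \<Rightarrow> real) \<Rightarrow> bool" where
  "max_usw n m L x \<longleftrightarrow> frac_alloc n m x \<and>
     (\<forall>y. frac_alloc n m y \<longrightarrow> usw n L y \<le> usw n L x)"

definition profile :: "nat \<Rightarrow> (nat \<Rightarrow> nat \<Rightarrow> real) \<Rightarrow> nat \<Rightarrow> real" where
  "profile m x i = (\<Sum>t<m. x t i)"

definition is_transfer :: "nat \<Rightarrow> nat \<Rightarrow> (nat \<Rightarrow> nat set) \<Rightarrow> (nat \<Rightarrow> nat \<Rightarrow> real)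
    \<Rightarrow> nat \<Rightarrow> (nat \<Rightarrow> nat) \<Rightarrow> (nat \<Rightarrow> nat) \<Rightarrow> real \<Rightarrow> bool" where
  "is_transfer n m L x k a b \<Delta> \<longleftrightarrow>
     2 \<le> k \<and> inj_on a {..<k} \<and> (\<forall>l<k. a l < n) \<and> 0 < \<Delta> \<and>
     (\<forall>l. l + 1 < k \<longrightarrow> b l < m \<and> 0 < x (b l) (a l) \<and> b l \<in> L (a (l + 1)) \<and> \<Delta> \<le> x (b l) (a l))"

definition narrowing_transfer :: "nat \<Rightarrow> nat \<Rightarrow> (nat \<Rightarrow> nat set) \<Rightarrow> (nat \<Rightarrow> nat \<Rightarrow> real)
    \<Rightarrow> nat \<Rightarrow> (nat \<Rightarrow> nat) \<Rightarrow> (nat \<Rightarrow> nat) \<Rightarrow> real \<Rightarrow> bool" where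
  "narrowing_transfer n m L x k a b \<Delta> \<longleftrightarrow>
     is_transfer n m L x k a b \<Delta> \<and>
     profile m x (a 0) - \<Delta> \<ge> profile m x (a (k - 1)) + \<Delta>"

definition stable :: "nat \<Rightarrow> nat \<Rightarrow> (nat \<Rightarrow> nat set) \<Rightarrow> (nat \<Rightarrow> nat \<Rightarrow> real) \<Rightarrow> bool" where
  "stable n m L x \<longleftrightarrow> \<not> (\<exists>k a b \<Delta>. narrowing_transfer n m L x k a b \<Delta>)"

definition layer :: "nat \<Rightarrow> nat \<Rightarrow> (nat \<Rightarrow> nat \<Rightarrow> real) \<Rightarrow> real \<Rightarrow> nat set" where
  "layer n m x d = {i. i < n \<and> profile m x i = d}"

end

theory Submission
  imports Defs
begin

(* Stability says that an agent owning a positive share of an item t has profile at most that of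
   every agent who likes t, and maximality of the welfare says that every such item is fully
   allocated. Hence for a set U of agents whose profiles all exceed those outside U, the items
   owned by U are owned entirely within U, and the total profile of U is the number of these
   items, an integer. Applying this to {h \<ge> d} and {h > d} shows that d |layer_d| is an integer,
   so d and d' are fractions with denominators at most n, and distinct such fractions differ by at
   least 1/n^2. *)

definition owned_items :: "nat \<Rightarrow> (nat \<Rightarrow> nat \<Rightarrow> real) \<Rightarrow> nat set \<Rightarrow> nat set" where
  "owned_items m x U = {t. t < m \<and> (\<exists>i\<in>U. 0 < x t i)}"

lemma stable_profile_le_if_owned_and_liked:
  assumes "stable n m L x" and "i < n" and "j < n" and "t < m"
    and owned: "0 < x t i" and liked: "t \<in> L j"
  shows "profile m x i \<le> profile m x j"
proof (rule ccontr)
  assume "\<not> ?thesis"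
  hence lt: "profile m x j < profile m x i" by simp
  hence "i \<noteq> j" by auto
  define \<Delta> where "\<Delta> = min (x t i) ((profile m x i - profile m x j) / 2)"
  define a where "a = (\<lambda>l::nat. if l = 0 then i else j)"
  have "inj_on a {..<2}"
    using \<open>i \<noteq> j\<close> by (auto simp: inj_on_def a_def)
  moreover have "0 < \<Delta>"
    using owned lt by (simp add: \<Delta>_def)
  ultimately have "is_transfer n m L x 2 a (\<lambda>_. t) \<Delta>"
    using assms by (auto simp: is_transfer_def a_def \<Delta>_def)
  moreover have "profile m x (a 0) - \<Delta> \<ge> profile m x (a (2 - 1)) + \<Delta>"
    by (simp add: a_def \<Delta>_def min_def field_simps)
  ultimately have "narrowing_transfer n m L x 2 a (\<lambda>_. t) \<Delta>"
    by (simp add: narrowing_transfer_def)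
  thus False
    using \<open>stable n m L x\<close> by (auto simp: stable_def)
qed

lemma max_usw_liked_item_fully_allocated:
  assumes fin: "\<forall>j<n. finite (L j)" and mu: "max_usw n m L x"
    and t: "t < m" and i: "i < n" and liked: "t \<in> L i"
  shows "(\<Sum>j<n. x t j) = 1"
proof (rule ccontr)
  have fa: "frac_alloc n m x"
    using mu by (simp add: max_usw_def)
  define e where "e = 1 - (\<Sum>j<n. x t j)"
  assume "(\<Sum>j<n. x t j) \<noteq> 1"
  hence "0 < e"
    using fa t by (auto simp: frac_alloc_def e_def less_le)
  define bump where "bump = (\<lambda>t' j. if t' = t \<and> j = i then e else 0)"
  define y where "y = (\<lambda>t' j. x t' j + bump t' j)"
  have "frac_alloc n m y"
    unfolding frac_alloc_def
  proof (intro conjI allI impI)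
    fix t' j assume "t' < m" "j < n"
    thus "0 \<le> y t' j"
      using fa \<open>0 < e\<close> by (auto simp: frac_alloc_def y_def bump_def)
  next
    fix t' assume "t' < m"
    have "(\<Sum>j<n. y t' j) = (\<Sum>j<n. x t' j) + (if t' = t then e else 0)"
      using i by (simp add: y_def bump_def sum.distrib)
    thus "(\<Sum>j<n. y t' j) \<le> 1"
      using fa \<open>t' < m\<close> by (auto simp: frac_alloc_def e_def)
  qed
  hence "usw n L y \<le> usw n L x"
    using mu by (simp add: max_usw_def)
  moreover have "(\<Sum>j<n. \<Sum>t'\<in>L j. bump t' j) = e"
  proof -
    have "(\<Sum>t'\<in>L j. bump t' j) = (if j = i then e else 0)" if "j < n" for j
      using fin that liked by (simp add: bump_def)
    thus ?thesis
      using i by simp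
  qed
  hence "usw n L y = usw n L x + e"
    by (simp add: usw_def y_def sum.distrib)
  ultimately show False
    using \<open>0 < e\<close> by simp
qed

lemma stable_upper_set_keeps_owned_items:
  assumes cl: "clean n m L x" and st: "stable n m L x"
    and up: "\<forall>i\<in>U. \<forall>j<n. j \<notin> U \<longrightarrow> profile m x j < profile m x i"
    and "U \<subseteq> {..<n}" and "i \<in> U" and "t < m" and "0 < x t i" and "j < n" and "j \<notin> U"
  shows "x t j = 0"
proof (rule ccontr)
  assume "x t j \<noteq> 0"
  hence "t \<in> L j"
    using cl assms(6-8) by (auto simp: clean_def)
  hence "profile m x i \<le> profile m x j"
    using stable_profile_le_if_owned_and_liked[OF st] assms(4-8) by auto
  thus False
    using up assms(5,8,9) by fastforce
qed

lemma profile_sum_upper_set: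
  assumes Lsub: "\<forall>i<n. L i \<subseteq> {..<m}" and cl: "clean n m L x"
    and mu: "max_usw n m L x" and st: "stable n m L x"
    and U: "U \<subseteq> {..<n}"
    and up: "\<forall>i\<in>U. \<forall>j<n. j \<notin> U \<longrightarrow> profile m x j < profile m x i"
  shows "(\<Sum>i\<in>U. profile m x i) = real (card (owned_items m x U))"
proof -
  have item_share: "(\<Sum>i\<in>U. x t i) = (if t \<in> owned_items m x U then 1 else 0)"
    if "t < m" for t
  proof (cases "t \<in> owned_items m x U")
    case True
    then obtain i where "i \<in> U" and owned: "0 < x t i"
      by (auto simp: owned_items_def)
    have "(\<Sum>i\<in>U. x t i) = (\<Sum>j<n. x t j)"
      using stable_upper_set_keeps_owned_items[OF cl st up U \<open>i \<in> U\<close> \<open>t < m\<close> owned] U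
      by (intro sum.mono_neutral_left) auto
    also have "\<dots> = 1"
    proof (rule max_usw_liked_item_fully_allocated[OF _ mu \<open>t < m\<close>])
      show "\<forall>j<n. finite (L j)"
        using Lsub finite_subset by blast
      show "i < n"
        using \<open>i \<in> U\<close> U by auto
      then show "t \<in> L i"
        using cl \<open>t < m\<close> owned by (fastforce simp: clean_def)
    qed
    finally show ?thesis
      using True by simp
  next
    case False
    have "0 \<le> x t i" if "i \<in> U" for i
      using mu \<open>t < m\<close> that U by (auto simp: max_usw_def frac_alloc_def)
    hence "\<forall>i\<in>U. x t i = 0"
      using False \<open>t < m\<close> by (force simp: owned_items_def)
    thus ?thesis
      using False by simp
  qed
  have "(\<Sum>i\<in>U. profile m x i) = (\<Sum>t<m. \<Sum>i\<in>U. x t i)"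
    unfolding profile_def by (rule sum.swap)
  also have "\<dots> = (\<Sum>t<m. if t \<in> owned_items m x U then 1 else 0)"
    using item_share by simp
  also have "\<dots> = real (card (owned_items m x U))"
    by (simp add: sum.If_cases owned_items_def Int_def)
  finally show ?thesis .
qed

lemma layer_value_times_card_Ints:
  assumes "\<forall>i<n. L i \<subseteq> {..<m}" and "clean n m L x"
    and "max_usw n m L x" and "stable n m L x"
  shows "d * real (card (layer n m x d)) \<in> \<int>"
proof -
  let ?h = "profile m x"
  define U_ge where "U_ge = {i. i < n \<and> d \<le> ?h i}"
  define U_gt where "U_gt = {i. i < n \<and> d < ?h i}"
  have "d * real (card (layer n m x d)) = (\<Sum>i\<in>layer n m x d. ?h i)"
    by (simp add: layer_def)
  also have "\<dots> = (\<Sum>i\<in>U_ge. ?h i) - (\<Sum>i\<in>U_gt. ?h i)"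
  proof -
    have "layer n m x d = U_ge - U_gt"
      by (auto simp: layer_def U_ge_def U_gt_def)
    thus ?thesis
      by (simp add: sum_diff U_ge_def U_gt_def subset_eq)
  qed
  also have "\<dots> = real (card (owned_items m x U_ge)) - real (card (owned_items m x U_gt))"
  proof -
    have "(\<Sum>i\<in>U_ge. ?h i) = real (card (owned_items m x U_ge))"
      by (rule profile_sum_upper_set[OF assms]) (auto simp: U_ge_def)
    moreover have "(\<Sum>i\<in>U_gt. ?h i) = real (card (owned_items m x U_gt))"
      by (rule profile_sum_upper_set[OF assms]) (auto simp: U_gt_def)
    ultimately show ?thesis
      by simp
  qed
  finally show ?thesis
    by simp
qed

lemma abs_diff_ge_of_bounded_denominators:
  fixes d d' :: real and q q' n :: nat
  assumes "1 \<le> q" "q \<le> n" "1 \<le> q'" "q' \<le> n"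
    and "d * real q \<in> \<int>" and "d' * real q' \<in> \<int>" and "d \<noteq> d'"
  shows "\<bar>d - d'\<bar> \<ge> 1 / (real n)^2"
proof -
  have "(d - d') * (real q * real q') = (d * real q) * real q' - (d' * real q') * real q"
    by (simp add: algebra_simps)
  also have "\<dots> \<in> \<int>"
    using assms(5,6) by (simp add: Ints_diff Ints_mult)
  finally obtain z where z: "(d - d') * (real q * real q') = of_int z"
    by (auto elim: Ints_cases)
  have "z \<noteq> 0"
    using z assms(1,3,7) by auto
  hence "1 \<le> \<bar>real_of_int z\<bar>"
    by linarith
  also have "\<dots> = \<bar>d - d'\<bar> * (real q * real q')"
    by (simp add: abs_mult z[symmetric])
  also have "\<dots> \<le> \<bar>d - d'\<bar> * (real n)^2"
    using assms(1-4) by (intro mult_left_mono) (auto simp: power2_eq_square intro: mult_mono)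
  finally show ?thesis
    using assms(1,2) by (simp add: divide_le_eq mult.commute)
qed

theorem lemma8:
  fixes n m :: nat and L :: "nat \<Rightarrow> nat set" and x :: "nat \<Rightarrow> nat \<Rightarrow> real" and d d' :: real
  assumes "\<forall>i<n. L i \<subseteq> {..<m}"
    and "frac_alloc n m x"
    and "clean n m L x"
    and "max_usw n m L x"
    and "stable n m L x"
    and "layer n m x d \<noteq> {}"
    and "layer n m x d' \<noteq> {}"
    and "d \<noteq> d'"
  shows "\<bar>d - d'\<bar> \<ge> 1 / (real n)^2"
proof -
  have layer_card: "1 \<le> card (layer n m x e) \<and> card (layer n m x e) \<le> n"
    if "layer n m x e \<noteq> {}" for e
  proof -
    have "layer n m x e \<subseteq> {..<n}"
      by (auto simp: layer_def)
    thus ?thesis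
      using that card_mono[of "{..<n}"] by (auto simp: Suc_le_eq card_gt_0_iff finite_subset)
  qed
  show ?thesis
    using abs_diff_ge_of_bounded_denominators layer_card assms(6-8)
      layer_value_times_card_Ints[OF assms(1,3-5)] by blast
qed

end
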